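(* For an Aronszajn tree $T$ the following are equivalent: (1) $T$ is SS; (2) $a(T)$ is $\mathsf{stat}$-pc; (3) $\mathbb{S}(T)$ is $\mathsf{stat}$-pc.
   Context: An Aronszajn tree is a tree of height $\omega_1$ with all levels and chains countable. A subset $X\subseteq T$ is stationary if $\{\mathrm{ht}(t):t\in X\}$ is stationary in $\omega_1$; $T$ is SS if every stationary subset of $T$ contains a stationary antichain. $a(T)$ is the poset of finite antichains of $T$ ordered by reverse inclusion. $\mathbb{S}(T)$ is the poset of finite partial functions $p:T\to\omega$ such that $p^{-1}(\{n\})$ is an antichain for every $n$, ordered by reverse inclusion. A poset is $\mathsf{stat}$-pc if for every stationary $S\subseteq\omega_1$ and every $\langle p_\alpha:\alpha\in S\rangle$ there is a stationary $S'\subseteq S$ with $\{p_\alpha:\alpha\in S'\}$ centered (every finite subset has a common lower bound). *)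

theory Defs
  imports "HOL-Library.Countable_Set"
begin

text \<open>omega_1 is represented by an abstract well-ordered type 'i that is uncountable
  and all of whose proper initial segments are countable (unique up to isomorphism).\<close>
definition omega1_like :: "'i::wellorder itself \<Rightarrow> bool" where
  "omega1_like _ \<longleftrightarrow> \<not> countable (UNIV :: 'i set) \<and> (\<forall>i::'i. countable {j. j < i})"

definition unbounded :: "'i::wellorder set \<Rightarrow> bool" where
  "unbounded C \<longleftrightarrow> (\<forall>i. \<exists>j\<in>C. i \<le> j)"

definition closed_set :: "'i::wellorder set \<Rightarrow> bool" where
  "closed_set C \<longleftrightarrow> (\<forall>i. (\<exists>j. j < i) \<and> (\<forall>j<i. \<exists>k\<in>C. j < k \<and> k < i) \<longrightarrow> i \<in> C)"

definition club :: "'i::wellorder set \<Rightarrow> bool" where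
  "club C \<longleftrightarrow> closed_set C \<and> unbounded C"

definition stationary :: "'i::wellorder set \<Rightarrow> bool" where
  "stationary S \<longleftrightarrow> (\<forall>C. club C \<longrightarrow> S \<inter> C \<noteq> {})"

definition is_tree :: "'a set \<Rightarrow> ('a \<Rightarrow> 'a \<Rightarrow> bool) \<Rightarrow> bool" where
  "is_tree T lt \<longleftrightarrow>
     (\<forall>t\<in>T. \<not> lt t t) \<and>
     (\<forall>s\<in>T. \<forall>t\<in>T. \<forall>u\<in>T. lt s t \<longrightarrow> lt t u \<longrightarrow> lt s u) \<and>
     (\<forall>t\<in>T. \<forall>s\<in>T. \<forall>u\<in>T. lt s t \<longrightarrow> lt u t \<longrightarrow> s = u \<or> lt s u \<or> lt u s) \<and>
     (\<forall>t\<in>T. \<forall>A. A \<subseteq> {s\<in>T. lt s t} \<longrightarrow> A \<noteq> {} \<longrightarrow> (\<exists>m\<in>A. \<forall>a\<in>A. \<not> lt a m))"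

definition has_height :: "'a set \<Rightarrow> ('a \<Rightarrow> 'a \<Rightarrow> bool) \<Rightarrow> 'a \<Rightarrow> 'i::wellorder \<Rightarrow> bool" where
  "has_height T lt t i \<longleftrightarrow>
     (\<exists>f. bij_betw f {j. j < i} {s\<in>T. lt s t} \<and>
          (\<forall>j k. j < i \<longrightarrow> k < i \<longrightarrow> (j < k \<longleftrightarrow> lt (f j) (f k))))"

definition ht :: "'a set \<Rightarrow> ('a \<Rightarrow> 'a \<Rightarrow> bool) \<Rightarrow> 'a \<Rightarrow> 'i::wellorder" where
  "ht T lt t = (THE i. has_height T lt t i)"

definition chain :: "'a set \<Rightarrow> ('a \<Rightarrow> 'a \<Rightarrow> bool) \<Rightarrow> 'a set \<Rightarrow> bool" where
  "chain T lt C \<longleftrightarrow> C \<subseteq> T \<and> (\<forall>s\<in>C. \<forall>t\<in>C. s = t \<or> lt s t \<or> lt t s)"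

definition antichain :: "'a set \<Rightarrow> ('a \<Rightarrow> 'a \<Rightarrow> bool) \<Rightarrow> 'a set \<Rightarrow> bool" where
  "antichain T lt A \<longleftrightarrow> A \<subseteq> T \<and> (\<forall>s\<in>A. \<forall>t\<in>A. s \<noteq> t \<longrightarrow> \<not> lt s t \<and> \<not> lt t s)"

definition aronszajn :: "'i::wellorder itself \<Rightarrow> 'a set \<Rightarrow> ('a \<Rightarrow> 'a \<Rightarrow> bool) \<Rightarrow> bool" where
  "aronszajn _ T lt \<longleftrightarrow> is_tree T lt \<and>
     (\<forall>t\<in>T. \<exists>i::'i. has_height T lt t i) \<and>
     (\<forall>i::'i. \<exists>t\<in>T. ht T lt t = i) \<and>
     (\<forall>i::'i. countable {t\<in>T. ht T lt t = i}) \<and>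
     (\<forall>C. chain T lt C \<longrightarrow> countable C)"

definition stationary_subset :: "'i::wellorder itself \<Rightarrow> 'a set \<Rightarrow> ('a \<Rightarrow> 'a \<Rightarrow> bool) \<Rightarrow> 'a set \<Rightarrow> bool" where
  "stationary_subset _ T lt X \<longleftrightarrow> X \<subseteq> T \<and> stationary ((ht T lt :: 'a \<Rightarrow> 'i) ` X)"

definition SS :: "'i::wellorder itself \<Rightarrow> 'a set \<Rightarrow> ('a \<Rightarrow> 'a \<Rightarrow> bool) \<Rightarrow> bool" where
  "SS I T lt \<longleftrightarrow> (\<forall>X. stationary_subset I T lt X \<longrightarrow>
      (\<exists>A\<subseteq>X. antichain T lt A \<and> stationary_subset I T lt A))"

definition centered :: "'p set \<Rightarrow> ('p \<Rightarrow> 'p \<Rightarrow> bool) \<Rightarrow> 'p set \<Rightarrow> bool" where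
  "centered P le Q \<longleftrightarrow> (\<forall>F. finite F \<longrightarrow> F \<subseteq> Q \<longrightarrow> (\<exists>r\<in>P. \<forall>q\<in>F. le r q))"

definition stat_pc :: "'i::wellorder itself \<Rightarrow> 'p set \<Rightarrow> ('p \<Rightarrow> 'p \<Rightarrow> bool) \<Rightarrow> bool" where
  "stat_pc _ P le \<longleftrightarrow> (\<forall>(S::'i set) (p::'i \<Rightarrow> 'p). stationary S \<longrightarrow> (\<forall>\<alpha>\<in>S. p \<alpha> \<in> P) \<longrightarrow>
      (\<exists>S'\<subseteq>S. stationary S' \<and> centered P le (p ` S')))"

definition aT :: "'a set \<Rightarrow> ('a \<Rightarrow> 'a \<Rightarrow> bool) \<Rightarrow> 'a set set" where
  "aT T lt = {A. finite A \<and> antichain T lt A}"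

definition aT_le :: "'a set \<Rightarrow> 'a set \<Rightarrow> bool" where
  "aT_le p q \<longleftrightarrow> q \<subseteq> p"

definition ST :: "'a set \<Rightarrow> ('a \<Rightarrow> 'a \<Rightarrow> bool) \<Rightarrow> ('a \<rightharpoonup> nat) set" where
  "ST T lt = {p. finite (dom p) \<and> dom p \<subseteq> T \<and> (\<forall>n. antichain T lt {t. p t = Some n})}"

definition ST_le :: "('a \<rightharpoonup> nat) \<Rightarrow> ('a \<rightharpoonup> nat) \<Rightarrow> bool" where
  "ST_le p q \<longleftrightarrow> q \<subseteq>\<^sub>m p"

end

theory Submission
  imports Defs
begin

text \<open>
  (1) \<Longrightarrow> (3). Given conditions p_\<alpha> of S(T) indexed by a stationary set, Fodor's lemma and
  the countability of the levels below any \<alpha> < \<omega>_1 shrink the index set, keeping it stationary,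
  until the parts of the p_\<alpha> below level \<alpha> all coincide, each p_\<alpha> lives below every larger
  index, and the nodes of p_\<alpha> at or above \<alpha>, projected to level \<alpha>, form lists of one fixed
  length whose projections to one fixed lower level c are equal and tell the entries apart.
  Applying SS once per list position turns each position into an antichain across indices.
  Now a node of p_\<alpha> cannot lie below a node of p_\<beta> for \<alpha> < \<beta>: projecting down to level c would
  match its position in the \<alpha>-list with the same position in the \<beta>-list. So the conditions are
  pairwise compatible and finite unions of them are common extensions.

  (3) \<Longrightarrow> (2) views a finite antichain as a one-colour condition; (2) \<Longrightarrow> (1) applies the
  stat-pc property to singletons.
\<close>

section \<open>Clubs and stationary subsets of \<omega>_1\<close>

lemma omega1_countable_bounded:
  assumes o: "omega1_like TYPE('i::wellorder)" and c: "countable (A::'i set)"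
  shows "\<exists>b. \<forall>a\<in>A. a < b"
proof (rule ccontr)
  assume "\<not> ?thesis"
  hence "UNIV = (\<Union>a\<in>A. insert a {j. j < a})"
    by (auto simp: not_less) (metis le_less)
  moreover have "countable (\<Union>a\<in>A. insert a {j. j < a})"
    using o c unfolding omega1_like_def by auto
  ultimately show False using o unfolding omega1_like_def by simp
qed

lemma omega1_no_max:
  assumes "omega1_like TYPE('i::wellorder)"
  shows "\<exists>y. (x::'i) < y"
  using omega1_countable_bounded[OF assms, of "{x}"] by auto

lemma omega1_sup_of_increasing_seq:
  assumes o: "omega1_like TYPE('i::wellorder)" and inc: "strict_mono (s::nat \<Rightarrow> 'i)"
  obtains d where "\<And>n. s n < d" and "\<And>j. j < d \<Longrightarrow> \<exists>n. j < s n"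
proof -
  have ex: "\<exists>b. \<forall>n. s n < b" using omega1_countable_bounded[OF o, of "range s"] by auto
  define d where "d = (LEAST b. \<forall>n. s n < b)"
  have above: "s n < d" for n using LeastI_ex[OF ex] by (simp add: d_def)
  have "\<exists>n. j < s n" if "j < d" for j
  proof (rule ccontr)
    assume "\<nexists>n. j < s n"
    then have "s n < j" for n
      using inc less_le_trans[of "s n" "s (Suc n)" j] by (auto simp: not_less strict_mono_Suc_iff)
    then have "d \<le> j" unfolding d_def by (blast intro: Least_le)
    with that show False by simp
  qed
  with above show ?thesis using that by blast
qed

definition is_limit :: "'i::wellorder \<Rightarrow> bool" where
  "is_limit d \<longleftrightarrow> (\<exists>j. j < d) \<and> (\<forall>j<d. \<exists>k. j < k \<and> k < d)"

lemma is_limit_finite_bound: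
  assumes "is_limit (d::'i::wellorder)" "finite H" "\<forall>x\<in>H. x < d"
  shows "\<exists>b<d. \<forall>x\<in>H. x < b"
  using assms(2,3)
proof (induction H rule: finite_induct)
  case empty thus ?case using assms(1) unfolding is_limit_def by auto
next
  case (insert x H)
  then obtain b where b: "b < d" "\<forall>y\<in>H. y < b" by auto
  obtain k where "max b x < k" "k < d" using assms(1) b insert.prems unfolding is_limit_def
    by (metis insertCI max_less_iff_conj)
  hence "\<forall>y\<in>insert x H. y < k" using b by (auto intro: less_trans)
  thus ?case using \<open>k < d\<close> by blast
qed

lemma omega1_clubs_meet_between:
  assumes o: "omega1_like TYPE('i::wellorder)" and "countable B"
    and C: "\<And>b. b \<in> B \<Longrightarrow> club (C b :: 'i set)"
  shows "\<exists>y. x < y \<and> (\<forall>b\<in>B. \<exists>z\<in>C b. x < z \<and> z < y)"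
proof -
  obtain x' where "x < x'" using omega1_no_max[OF o] by blast
  have "\<forall>b\<in>B. \<exists>z. z \<in> C b \<and> x' \<le> z"
    using C unfolding club_def unbounded_def by blast
  then obtain z where z: "\<And>b. b \<in> B \<Longrightarrow> z b \<in> C b" "\<And>b. b \<in> B \<Longrightarrow> x' \<le> z b"
    by metis
  have "x < z b" if "b \<in> B" for b using \<open>x < x'\<close> z(2)[OF that] by (rule less_le_trans)
  moreover have "countable (insert x (z ` B))" using \<open>countable B\<close> by simp
  then obtain y where "\<forall>a\<in>insert x (z ` B). a < y"
    using omega1_countable_bounded[OF o] by blast
  ultimately show ?thesis using z(1) by blast
qed

lemma increasing_seq_by_steps:
  fixes i :: "'a::order"
  assumes step: "\<And>x. \<exists>y. x < y \<and> R x y"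
  obtains s where "strict_mono s" "\<And>n. i \<le> s n" "\<And>n. R (s n) (s (Suc n))"
proof -
  have "\<exists>s. \<forall>n. i \<le> s n \<and> s n < s (Suc n) \<and> R (s n) (s (Suc n))"
  proof (rule dependent_nat_choice)
    fix x n assume "i \<le> x"
    obtain y where "x < y" "R x y" using step by blast
    moreover have "i \<le> y" using \<open>i \<le> x\<close> \<open>x < y\<close> by (simp add: le_less_trans less_imp_le)
    ultimately show "\<exists>y. i \<le> y \<and> x < y \<and> R x y" by blast
  qed auto
  then show ?thesis using that by (auto simp: strict_mono_Suc_iff)
qed

text \<open>The common engine behind closure of clubs under countable and diagonal intersections.\<close>
lemma omega1_diagonal_point:
  fixes C :: "'b \<Rightarrow> 'i::wellorder set" and J :: "'i \<Rightarrow> 'b set"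
  assumes o: "omega1_like TYPE('i)"
    and J_countable: "\<And>x. countable (J x)" and J_mono: "\<And>x y. x \<le> y \<Longrightarrow> J x \<subseteq> J y"
    and C: "\<And>x b. b \<in> J x \<Longrightarrow> club (C b)"
  shows "\<exists>d>i. is_limit d \<and> (\<forall>x<d. \<forall>b\<in>J x. d \<in> C b)"
proof -
  have "\<exists>y. x < y \<and> (\<forall>b\<in>J x. \<exists>z\<in>C b. x < z \<and> z < y)" for x
    by (rule omega1_clubs_meet_between[OF o J_countable]) (rule C)
  then obtain s where inc: "strict_mono s" and s: "\<And>n. i \<le> s n"
    and step: "\<And>n. \<forall>b\<in>J (s n). \<exists>z\<in>C b. s n < z \<and> z < s (Suc n)"
    using increasing_seq_by_steps[where R="\<lambda>x y. \<forall>b\<in>J x. \<exists>z\<in>C b. x < z \<and> z < y" and i=i]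
    by blast
  obtain d where above: "\<And>n. s n < d" and cofinal: "\<And>j. j < d \<Longrightarrow> \<exists>n. j < s n"
    using omega1_sup_of_increasing_seq[OF o inc] by blast
  have "d \<in> C b" if "x < d" "b \<in> J x" for x b
  proof -
    obtain n where n: "x < s n" using cofinal[OF \<open>x < d\<close>] by blast
    have "\<exists>k\<in>C b. j < k \<and> k < d" if "j < d" for j
    proof -
      obtain n' where n': "j < s n'" using cofinal[OF \<open>j < d\<close>] by blast
      define m where "m = max n n'"
      have "s n \<le> s m" "s n' \<le> s m"
        using strict_mono_less_eq[OF inc] by (simp_all add: m_def)
      then have "x \<le> s m" "j < s m" using n n' by simp_all
      then have "b \<in> J (s m)" using J_mono \<open>b \<in> J x\<close> by blast
      then obtain z where "z \<in> C b" "s m < z" "z < s (Suc m)" using step by blast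
      moreover have "j < z" using \<open>j < s m\<close> \<open>s m < z\<close> by (rule less_trans)
      moreover have "z < d" using \<open>z < s (Suc m)\<close> above[of "Suc m"] by (rule less_trans)
      ultimately show ?thesis by blast
    qed
    then show ?thesis using C[OF \<open>b \<in> J x\<close>] above[of 0] unfolding club_def closed_set_def by blast
  qed
  moreover have "is_limit d"
    unfolding is_limit_def using above cofinal by blast
  moreover have "i < d" using s[of 0] above[of 0] by (rule le_less_trans)
  ultimately show ?thesis by blast
qed

lemma club_Inter:
  assumes o: "omega1_like TYPE('i::wellorder)" and "countable I"
    and C: "\<And>b. b \<in> I \<Longrightarrow> club (C b :: 'i set)"
  shows "club (\<Inter>b\<in>I. C b)"
  unfolding club_def
proof
  show "closed_set (\<Inter>b\<in>I. C b)"
    unfolding closed_set_def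
  proof (intro allI impI INT_I)
    fix i b
    assume i: "(\<exists>j. j < i) \<and> (\<forall>j<i. \<exists>k\<in>\<Inter>b\<in>I. C b. j < k \<and> k < i)" and "b \<in> I"
    then have "\<forall>j<i. \<exists>k\<in>C b. j < k \<and> k < i" by blast
    then show "i \<in> C b" using i C[OF \<open>b \<in> I\<close>] unfolding club_def closed_set_def by blast
  qed
  show "unbounded (\<Inter>b\<in>I. C b)"
    unfolding unbounded_def
  proof
    fix i
    obtain d where "i < d" "\<forall>x<d. \<forall>b\<in>I. d \<in> C b"
      using omega1_diagonal_point[where J="\<lambda>_. I" and C=C and i=i, OF o \<open>countable I\<close> _ C]
      by blast
    then show "\<exists>j\<in>\<Inter>b\<in>I. C b. i \<le> j" by (intro bexI[of _ d]) auto
  qed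
qed

lemma club_diagonal_Inter:
  assumes o: "omega1_like TYPE('i::wellorder)" and C: "\<And>a. club (C a :: 'i set)"
  shows "club {d. \<forall>a<d. d \<in> C a}"
  unfolding club_def
proof
  show "closed_set {d. \<forall>a<d. d \<in> C a}"
    unfolding closed_set_def
  proof (intro allI impI CollectI)
    fix i a assume i: "(\<exists>j. j < i) \<and> (\<forall>j<i. \<exists>k\<in>{d. \<forall>a<d. d \<in> C a}. j < k \<and> k < i)"
      and "a < i"
    have "\<exists>k\<in>C a. j < k \<and> k < i" if "j < i" for j
    proof -
      have "max j a < i" using \<open>j < i\<close> \<open>a < i\<close> by simp
      then obtain k where "k \<in> {d. \<forall>a<d. d \<in> C a}" "max j a < k" "k < i"
        using i by blast
      then show ?thesis by auto
    qed
    then show "i \<in> C a" using C[of a] i unfolding club_def closed_set_def by blast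
  qed
  show "unbounded {d. \<forall>a<d. d \<in> C a}"
    unfolding unbounded_def
  proof
    fix i
    have "countable {a. a \<le> x}" for x :: 'i
    proof -
      have "{a. a \<le> x} = insert x {a. a < x}" by auto
      then show ?thesis using o unfolding omega1_like_def by simp
    qed
    then obtain d where d: "i < d" "\<forall>x<d. \<forall>a\<in>{a. a \<le> x}. d \<in> C a"
      using omega1_diagonal_point[OF o, of "\<lambda>x. {a. a \<le> x}" C i] C by force
    then have "\<forall>a<d. d \<in> C a" by (meson mem_Collect_eq order_refl)
    then show "\<exists>j\<in>{d. \<forall>a<d. d \<in> C a}. i \<le> j" using d(1) by (auto intro: less_imp_le)
  qed
qed

lemma club_Int:
  assumes "omega1_like TYPE('i::wellorder)" "club (C::'i set)" "club D"
  shows "club (C \<inter> D)"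
  using club_Inter[OF assms(1), of "{C, D}" id] assms(2,3) by auto

lemma stationary_Int_club:
  assumes "omega1_like TYPE('i::wellorder)" "stationary (S::'i set)" "club C"
  shows "stationary (S \<inter> C)"
  using assms club_Int[OF assms(1)] unfolding stationary_def by (metis inf_assoc)

lemma stationary_Int_club_nonempty: "stationary S \<Longrightarrow> club C \<Longrightarrow> S \<inter> C \<noteq> {}"
  unfolding stationary_def by blast

lemma stationary_countable_partition:
  assumes o: "omega1_like TYPE('i::wellorder)" and S: "stationary (S::'i set)"
    and "countable (f ` S)"
  shows "\<exists>v. stationary {a\<in>S. f a = v}"
proof (rule ccontr)
  assume "\<nexists>v. stationary {a\<in>S. f a = v}"
  then obtain C where C: "\<And>v. club (C v)" "\<And>v. {a\<in>S. f a = v} \<inter> C v = {}"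
    unfolding stationary_def by metis
  have "club (\<Inter>v\<in>f ` S. C v)" using club_Inter[OF o \<open>countable (f ` S)\<close>] C(1) by blast
  then obtain a where "a \<in> S" "a \<in> (\<Inter>v\<in>f ` S. C v)"
    using stationary_Int_club_nonempty[OF S] by blast
  then show False using C(2)[of "f a"] by blast
qed

lemma pressing_down:
  assumes o: "omega1_like TYPE('i::wellorder)" and S: "stationary (S::'i set)"
    and regressive: "\<And>a. a \<in> S \<Longrightarrow> f a < a"
  shows "\<exists>v. stationary {a\<in>S. f a = v}"
proof (rule ccontr)
  assume "\<nexists>v. stationary {a\<in>S. f a = v}"
  then obtain C where C: "\<And>v. club (C v)" "\<And>v. {a\<in>S. f a = v} \<inter> C v = {}"
    unfolding stationary_def by metis
  have "S \<inter> {d. \<forall>v<d. d \<in> C v} \<noteq> {}"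
    by (rule stationary_Int_club_nonempty[OF S club_diagonal_Inter[OF o C(1)]])
  then obtain a where "a \<in> S" "\<forall>v<a. a \<in> C v" by blast
  then show False using C(2)[of "f a"] regressive by blast
qed

lemma club_final_segment:
  assumes o: "omega1_like TYPE('i::wellorder)"
  shows "club {d::'i. c < d}"
  unfolding club_def
proof
  show "closed_set {d::'i. c < d}"
    unfolding closed_set_def
  proof (intro allI impI)
    fix i assume "(\<exists>j. j < i) \<and> (\<forall>j<i. \<exists>k\<in>{d. c < d}. j < k \<and> k < i)"
    then obtain k where "c < k" "k < i" by blast
    then show "i \<in> {d. c < d}" by simp
  qed
  show "unbounded {d::'i. c < d}"
    unfolding unbounded_def
  proof
    fix i
    obtain d where "max c i < d" using omega1_no_max[OF o] by blast
    then show "\<exists>j\<in>{d. c < d}. i \<le> j" by auto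
  qed
qed

lemma club_closure_points:
  assumes o: "omega1_like TYPE('i::wellorder)"
  shows "club {d. \<forall>a<d. (g::'i \<Rightarrow> 'i) a < d}"
  using club_diagonal_Inter[OF o club_final_segment[OF o], of g] by simp

lemma club_limits:
  assumes o: "omega1_like TYPE('i::wellorder)"
  shows "club {d::'i. is_limit d}"
  unfolding club_def
proof
  show "closed_set {d::'i. is_limit d}" unfolding closed_set_def is_limit_def by blast
  show "unbounded {d::'i. is_limit d}"
    unfolding unbounded_def
  proof
    fix i :: 'i
    obtain d where "i < d" "is_limit d"
      using omega1_diagonal_point[OF o, of "\<lambda>_. {}" "\<lambda>_::'i. UNIV" i] by auto
    then show "\<exists>j\<in>{d. is_limit d}. i \<le> j" by auto
  qed
qed

lemma stationary_limits_bounding_finite_sets: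
  assumes o: "omega1_like TYPE('i::wellorder)" and S: "stationary S"
    and F: "\<And>a. a \<in> S \<Longrightarrow> finite (F a :: 'i set)"
  shows "\<exists>S'\<subseteq>S. stationary S' \<and> (\<forall>a\<in>S'. is_limit a) \<and>
    (\<forall>a\<in>S'. \<forall>b\<in>S'. a < b \<longrightarrow> (\<forall>x\<in>F a. x < b))"
proof -
  define g where "g a = (SOME \<beta>. \<forall>x\<in>F a. x < \<beta>)" for a
  have g: "x < g a" if "a \<in> S" "x \<in> F a" for a x
  proof -
    have "\<exists>\<beta>. \<forall>x\<in>F a. x < \<beta>"
      using omega1_countable_bounded[OF o] F[OF that(1)] countable_finite by blast
    from someI_ex[OF this] show ?thesis using that(2) unfolding g_def by blast
  qed
  define S' where "S' = S \<inter> {d. \<forall>a<d. g a < d} \<inter> {d. is_limit d}"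
  have "stationary S'" unfolding S'_def
    by (intro stationary_Int_club[OF o] S club_closure_points[OF o] club_limits[OF o])
  moreover have "x < b" if "a \<in> S'" "b \<in> S'" "a < b" "x \<in> F a" for a b x
  proof -
    have "a \<in> S" "g a < b" using that(1-3) unfolding S'_def by auto
    then show ?thesis using g[OF _ that(4)] by (blast intro: less_trans)
  qed
  moreover have "S' \<subseteq> S" "\<forall>a\<in>S'. is_limit a" unfolding S'_def by auto
  ultimately show ?thesis by blast
qed

section \<open>Heights and ancestors in an Aronszajn tree\<close>

lemma wellorder_embedding_inflationary:
  fixes f :: "'i::wellorder \<Rightarrow> 'i"
  assumes mono: "\<And>a b. a < j \<Longrightarrow> b < j \<Longrightarrow> a < b \<Longrightarrow> f a < f b"
  shows "k < j \<Longrightarrow> k \<le> f k"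
proof (induction k rule: less_induct)
  case (less k)
  show ?case
  proof (rule ccontr)
    assume "\<not> k \<le> f k"
    hence fk: "f k < k" by simp
    have "f k \<le> f (f k)" using less.IH[OF fk] fk less.prems by (meson less_trans)
    moreover have "f (f k) < f k" using mono[OF _ less.prems fk] fk less.prems by (meson less_trans)
    ultimately show False by simp
  qed
qed

lemma wellorder_embedding_le:
  fixes f :: "'i::wellorder \<Rightarrow> 'i"
  assumes mono: "\<And>a b. a < j \<Longrightarrow> b < j \<Longrightarrow> a < b \<Longrightarrow> f a < f b"
    and into: "\<And>a. a < j \<Longrightarrow> f a < i"
  shows "j \<le> i"
proof (rule ccontr)
  assume "\<not> j \<le> i" hence ij: "i < j" by simp
  have "i \<le> f i" using wellorder_embedding_inflationary[of j f i] mono ij by blast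
  moreover have "f i < i" using into ij by blast
  ultimately show False by simp
qed

lemma has_height_unique:
  assumes "has_height T lt t (i::'i::wellorder)" "has_height T lt t j"
  shows "i = j"
proof -
  have "j \<le> i" if hi: "has_height T lt t (i::'i)" and hj: "has_height T lt t j" for i j
  proof -
    obtain f where f: "bij_betw f {k. k < i} {s\<in>T. lt s t}"
      "\<And>a b. a < i \<Longrightarrow> b < i \<Longrightarrow> (a < b \<longleftrightarrow> lt (f a) (f b))"
      using hi unfolding has_height_def by blast
    obtain g where g: "bij_betw g {k. k < j} {s\<in>T. lt s t}"
      "\<And>a b. a < j \<Longrightarrow> b < j \<Longrightarrow> (a < b \<longleftrightarrow> lt (g a) (g b))"
      using hj unfolding has_height_def by blast
    define \<phi> where "\<phi> = inv_into {k. k < i} f \<circ> g"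
    have into: "\<phi> a < i" and f_\<phi>: "f (\<phi> a) = g a" if "a < j" for a
    proof -
      have ga: "g a \<in> f ` {k. k < i}" using f(1) g(1) that unfolding bij_betw_def by auto
      show "\<phi> a < i" using inv_into_into[OF ga] unfolding \<phi>_def by simp
      show "f (\<phi> a) = g a" using f_inv_into_f[OF ga] unfolding \<phi>_def by simp
    qed
    have "\<phi> a < \<phi> b" if "a < j" "b < j" "a < b" for a b
      using g(2)[OF that(1,2)] f(2)[OF into[OF that(1)] into[OF that(2)]] f_\<phi> that by simp
    then show ?thesis using wellorder_embedding_le[of j \<phi> i] into by blast
  qed
  then show ?thesis using assms by (meson order.antisym)
qed

definition tree_le :: "('a \<Rightarrow> 'a \<Rightarrow> bool) \<Rightarrow> 'a \<Rightarrow> 'a \<Rightarrow> bool" where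
  "tree_le lt s t \<longleftrightarrow> s = t \<or> lt s t"

locale aronszajn_tree =
  fixes T :: "'a set" and lt :: "'a \<Rightarrow> 'a \<Rightarrow> bool" and h :: "'a \<Rightarrow> 'i::wellorder"
  assumes h_def: "h = ht T lt" and omega1: "omega1_like TYPE('i)"
    and aronszajn: "aronszajn TYPE('i) T lt"
begin

lemma is_tree: "is_tree T lt"
  using aronszajn unfolding aronszajn_def by (elim conjE)

lemma lt_trans:
  assumes "s \<in> T" "t \<in> T" "u \<in> T" "lt s t" "lt t u"
  shows "lt s u"
proof -
  have "\<forall>s\<in>T. \<forall>t\<in>T. \<forall>u\<in>T. lt s t \<longrightarrow> lt t u \<longrightarrow> lt s u"
    using is_tree unfolding is_tree_def by (elim conjE)
  then show ?thesis using assms by blast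
qed

lemma predecessors_linear:
  assumes "t \<in> T" "s \<in> T" "u \<in> T" "lt s t" "lt u t"
  shows "s = u \<or> lt s u \<or> lt u s"
proof -
  have "\<forall>t\<in>T. \<forall>s\<in>T. \<forall>u\<in>T. lt s t \<longrightarrow> lt u t \<longrightarrow> s = u \<or> lt s u \<or> lt u s"
    using is_tree unfolding is_tree_def by (elim conjE)
  then show ?thesis using assms by blast
qed

lemma tree_le_lt_trans:
  "s \<in> T \<Longrightarrow> t \<in> T \<Longrightarrow> u \<in> T \<Longrightarrow> tree_le lt s t \<Longrightarrow> lt t u \<Longrightarrow> lt s u"
  unfolding tree_le_def using lt_trans by blast

lemma has_height_h: "t \<in> T \<Longrightarrow> has_height T lt t (h t)"
proof -
  assume "t \<in> T"
  moreover have "\<forall>t\<in>T. \<exists>i::'i. has_height T lt t i"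
    using aronszajn unfolding aronszajn_def by (elim conjE)
  ultimately obtain i :: 'i where i: "has_height T lt t i" by blast
  then have "(THE i. has_height T lt t i) = i" by (blast intro: has_height_unique)
  then show ?thesis using i unfolding h_def ht_def by simp
qed

lemma h_eqI: "t \<in> T \<Longrightarrow> has_height T lt t i \<Longrightarrow> h t = i"
  by (rule has_height_unique[OF has_height_h])

lemma countable_level: "countable {t\<in>T. h t = i}"
proof -
  have "\<forall>i::'i. countable {t\<in>T. ht T lt t = i}"
    using aronszajn unfolding aronszajn_def by (elim conjE)
  then show ?thesis unfolding h_def by blast
qed

lemma countable_below: "countable {t\<in>T. h t < c}"
proof -
  have "{t\<in>T. h t < c} = (\<Union>i\<in>{i. i < c}. {t\<in>T. h t = i})" by auto
  moreover have "countable {i. i < c}" using omega1 unfolding omega1_like_def by blast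
  ultimately show ?thesis using countable_level by auto
qed

lemma h_enumerated_predecessor:
  assumes t: "t \<in> T" and f: "bij_betw f {k. k < i} {s\<in>T. lt s t}"
    "\<And>a b. a < i \<Longrightarrow> b < i \<Longrightarrow> (a < b \<longleftrightarrow> lt (f a) (f b))"
    and k: "k < i"
  shows "h (f k) = k"
proof -
  have fk: "f j \<in> T \<and> lt (f j) t" if "j < i" for j
    using f(1) that unfolding bij_betw_def by auto
  have "{s\<in>T. lt s (f k)} = f ` {j. j < k}"
  proof (intro subset_antisym subsetI)
    fix s assume s: "s \<in> {s\<in>T. lt s (f k)}"
    then have "s \<in> {s\<in>T. lt s t}" using lt_trans fk[OF k] t by blast
    then obtain j where j: "j < i" "s = f j" using f(1) unfolding bij_betw_def by auto
    then have "j < k" using f(2)[OF j(1) k] s by simp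
    then show "s \<in> f ` {j. j < k}" using j by blast
  next
    fix s assume "s \<in> f ` {j. j < k}"
    then obtain j where j: "j < k" "s = f j" by blast
    have "j < i" using j(1) k by (rule less_trans)
    then show "s \<in> {s\<in>T. lt s (f k)}" using fk f(2)[OF _ k] j by simp
  qed
  moreover have "inj_on f {j. j < k}"
    using f(1) k unfolding bij_betw_def by (auto elim: inj_on_subset)
  moreover have "\<forall>a b. a < k \<longrightarrow> b < k \<longrightarrow> (a < b \<longleftrightarrow> lt (f a) (f b))"
    using f(2) k by (meson less_trans)
  ultimately have "has_height T lt (f k) k" unfolding has_height_def bij_betw_def by blast
  then show ?thesis using h_eqI fk[OF k] by blast
qed

lemma predecessor_at_height:
  assumes t: "t \<in> T" and d: "d < h t"
  shows "\<exists>s\<in>T. lt s t \<and> h s = d"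
proof -
  obtain f where f: "bij_betw f {k. k < h t} {s\<in>T. lt s t}"
    "\<And>a b. a < h t \<Longrightarrow> b < h t \<Longrightarrow> (a < b \<longleftrightarrow> lt (f a) (f b))"
    using has_height_h[OF t] unfolding has_height_def by blast
  then show ?thesis
    using h_enumerated_predecessor[OF t f d] d unfolding bij_betw_def by blast
qed

lemma h_less: "s \<in> T \<Longrightarrow> t \<in> T \<Longrightarrow> lt s t \<Longrightarrow> h s < h t"
proof -
  assume st: "s \<in> T" "t \<in> T" "lt s t"
  obtain f where f: "bij_betw f {k. k < h t} {s\<in>T. lt s t}"
    "\<And>a b. a < h t \<Longrightarrow> b < h t \<Longrightarrow> (a < b \<longleftrightarrow> lt (f a) (f b))"
    using has_height_h[OF st(2)] unfolding has_height_def by blast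
  obtain k where "k < h t" "s = f k" using f(1) st unfolding bij_betw_def by auto
  then show ?thesis using h_enumerated_predecessor[OF st(2) f] by simp
qed

lemma tree_le_h_le: "s \<in> T \<Longrightarrow> t \<in> T \<Longrightarrow> tree_le lt s t \<Longrightarrow> h s \<le> h t"
  unfolding tree_le_def using h_less less_imp_le by blast

lemma tree_le_trans:
  "s \<in> T \<Longrightarrow> t \<in> T \<Longrightarrow> u \<in> T \<Longrightarrow> tree_le lt s t \<Longrightarrow> tree_le lt t u \<Longrightarrow> tree_le lt s u"
  unfolding tree_le_def using lt_trans by blast

lemma tree_le_unique:
  assumes x: "x \<in> T" and s: "s \<in> T" "tree_le lt s x" and s': "s' \<in> T" "tree_le lt s' x"
    and "h s = h s'"
  shows "s = s'"
proof -
  have "\<not> lt s s'" "\<not> lt s' s" using h_less[OF s(1) s'(1)] h_less[OF s'(1) s(1)] \<open>h s = h s'\<close> by auto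
  moreover have "\<not> lt s x" if "s' = x" using h_less[OF s(1) x] that \<open>h s = h s'\<close> by auto
  moreover have "\<not> lt s' x" if "s = x" using h_less[OF s'(1) x] that \<open>h s = h s'\<close> by auto
  ultimately show ?thesis
    using predecessors_linear[OF x s(1) s'(1)] s(2) s'(2) unfolding tree_le_def by blast
qed

text \<open>The ancestor of x at height d (x itself when d = h x); only meaningful for d \<le> h x.\<close>
definition anc :: "'i \<Rightarrow> 'a \<Rightarrow> 'a" where
  "anc d x = (THE s. s \<in> T \<and> tree_le lt s x \<and> h s = d)"

lemma anc:
  assumes "x \<in> T" "d \<le> h x"
  shows "anc d x \<in> T" "tree_le lt (anc d x) x" "h (anc d x) = d"
proof -
  have "\<exists>s. s \<in> T \<and> tree_le lt s x \<and> h s = d"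
  proof (cases "d = h x")
    case True
    then show ?thesis using assms(1) unfolding tree_le_def by blast
  next
    case False
    then have "d < h x" using assms(2) by simp
    then show ?thesis using predecessor_at_height[OF assms(1)] unfolding tree_le_def by blast
  qed
  then have "\<exists>!s. s \<in> T \<and> tree_le lt s x \<and> h s = d"
    using tree_le_unique[OF assms(1)] by blast
  then have "anc d x \<in> T \<and> tree_le lt (anc d x) x \<and> h (anc d x) = d"
    unfolding anc_def by (rule theI')
  then show "anc d x \<in> T" "tree_le lt (anc d x) x" "h (anc d x) = d" by auto
qed

lemma anc_eqI:
  assumes x: "x \<in> T" and s: "s \<in> T" "tree_le lt s x"
  shows "anc (h s) x = s"
proof -
  have "h s \<le> h x" using tree_le_h_le[OF s(1) x s(2)] .
  then show ?thesis using tree_le_unique[OF x anc(1,2)[OF x] s] anc(3)[OF x] by simp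
qed

lemma anc_anc:
  assumes x: "x \<in> T" and "d \<le> d'" "d' \<le> h x"
  shows "anc d (anc d' x) = anc d x"
proof -
  have y: "anc d' x \<in> T" "tree_le lt (anc d' x) x" "h (anc d' x) = d'" using anc[OF x] assms by auto
  then have z: "anc d (anc d' x) \<in> T" "tree_le lt (anc d (anc d' x)) (anc d' x)"
    "h (anc d (anc d' x)) = d" using anc[OF y(1)] assms by auto
  have "tree_le lt (anc d (anc d' x)) x" by (rule tree_le_trans[OF z(1) y(1) x z(2) y(2)])
  then show ?thesis using anc_eqI[OF x z(1)] z(3) by simp
qed

end

section \<open>SS implies that S(T) is stat-pc\<close>

lemma countable_finite_maps:
  assumes "countable (B::'a set)"
  shows "countable {q::'a \<rightharpoonup> 'b::countable. finite (dom q) \<and> dom q \<subseteq> B}"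
proof -
  define graph where "graph q = {(x, n). q x = Some n}" for q :: "'a \<rightharpoonup> 'b"
  have inj: "inj graph"
  proof (rule injI)
    fix q q' assume "graph q = graph q'"
    then have "q x = Some n \<longleftrightarrow> q' x = Some n" for x n
      unfolding graph_def by (metis (mono_tags, lifting) case_prod_conv mem_Collect_eq)
    then show "q = q'" by (metis not_Some_eq ext)
  qed
  have graphs: "graph ` {q :: 'a \<rightharpoonup> 'b. finite (dom q) \<and> dom q \<subseteq> B} \<subseteq> {A. finite A \<and> A \<subseteq> B \<times> UNIV}"
  proof (rule image_subsetI)
    fix q assume q: "q \<in> {q :: 'a \<rightharpoonup> 'b. finite (dom q) \<and> dom q \<subseteq> B}"
    have "graph q \<subseteq> dom q \<times> ran q" unfolding graph_def by (auto simp: ran_def)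
    moreover have "finite (dom q \<times> ran q)" using q by (simp add: finite_ran)
    ultimately have "finite (graph q)" by (rule finite_subset)
    moreover have "graph q \<subseteq> B \<times> UNIV" using q \<open>graph q \<subseteq> dom q \<times> ran q\<close> by auto
    ultimately show "graph q \<in> {A. finite A \<and> A \<subseteq> B \<times> UNIV}" by simp
  qed
  have "countable {A. finite A \<and> A \<subseteq> B \<times> (UNIV::'b set)}"
    by (rule countable_Collect_finite_subset) (use assms in auto)
  then have "countable (graph ` {q. finite (dom q) \<and> dom q \<subseteq> B})"
    by (rule countable_subset[OF graphs])
  then show ?thesis by (rule countable_image_inj_on) (use inj in \<open>simp add: inj_on_def\<close>)
qed

lemma centered_ST_if_compatible:
  assumes Q: "Q \<subseteq> ST T lt"
    and agree: "\<And>p q t. p \<in> Q \<Longrightarrow> q \<in> Q \<Longrightarrow> t \<in> dom p \<Longrightarrow> t \<in> dom q \<Longrightarrow> p t = q t"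
    and fibres: "\<And>p q s t n. p \<in> Q \<Longrightarrow> q \<in> Q \<Longrightarrow> p s = Some n \<Longrightarrow> q t = Some n \<Longrightarrow> s \<noteq> t \<Longrightarrow>
      \<not> lt s t"
  shows "centered (ST T lt) ST_le Q"
  unfolding centered_def
proof (intro allI impI)
  fix F assume F: "finite F" "F \<subseteq> Q"
  define r where "r t = (if \<exists>p\<in>F. t \<in> dom p then (SOME p. p \<in> F \<and> t \<in> dom p) t else None)" for t
  have r: "r t = p t" if "p \<in> F" "t \<in> dom p" for p t
  proof -
    define c where "c = (SOME p. p \<in> F \<and> t \<in> dom p)"
    have "\<exists>p. p \<in> F \<and> t \<in> dom p" using that by blast
    then have c: "c \<in> F" "t \<in> dom c" using someI_ex unfolding c_def by (metis (lifting))+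
    have "r t = c t" using that unfolding r_def c_def by auto
    also have "\<dots> = p t" using agree[of c p t] F(2) c that by auto
    finally show ?thesis .
  qed
  have dom_r: "dom r = (\<Union>p\<in>F. dom p)"
  proof
    show "dom r \<subseteq> (\<Union>p\<in>F. dom p)" unfolding r_def by (auto split: if_splits)
    show "(\<Union>p\<in>F. dom p) \<subseteq> dom r"
    proof
      fix t assume "t \<in> (\<Union>p\<in>F. dom p)"
      then obtain p where "p \<in> F" "t \<in> dom p" by blast
      then show "t \<in> dom r" using r[of p t] by (simp add: domIff)
    qed
  qed
  have "p \<in> ST T lt" if "p \<in> F" for p using that F(2) Q by blast
  then have "finite (dom r)" "dom r \<subseteq> T" using F(1) dom_r unfolding ST_def by auto
  moreover have "antichain T lt {t. r t = Some n}" for n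
    unfolding antichain_def
  proof (rule conjI)
    show "{t. r t = Some n} \<subseteq> T" using \<open>dom r \<subseteq> T\<close> by blast
    show "\<forall>s\<in>{t. r t = Some n}. \<forall>t\<in>{t. r t = Some n}. s \<noteq> t \<longrightarrow> \<not> lt s t \<and> \<not> lt t s"
    proof (intro ballI impI)
      fix s t assume "s \<in> {t. r t = Some n}" "t \<in> {t. r t = Some n}" "s \<noteq> t"
      then obtain p q where "p \<in> F" "q \<in> F" "p s = Some n" "q t = Some n"
        using dom_r r by (metis (mono_tags, lifting) UN_iff domI mem_Collect_eq)
      then show "\<not> lt s t \<and> \<not> lt t s" using fibres F(2) \<open>s \<noteq> t\<close> by blast
    qed
  qed
  ultimately have "r \<in> ST T lt" unfolding ST_def by blast
  moreover have "ST_le r p" if "p \<in> F" for p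
    unfolding ST_le_def map_le_def using r that by simp
  ultimately show "\<exists>r\<in>ST T lt. \<forall>q\<in>F. ST_le r q" by blast
qed

context aronszajn_tree
begin

definition preds :: "'a \<Rightarrow> 'a set" where
  "preds x = {s\<in>T. lt s x}"

lemma anc_ne_if_predecessor:
  assumes u: "u \<in> T" and u': "u' \<in> T" "h u' = h u"
    and s: "s \<in> T" "lt s u" "\<not> lt s u'"
  shows "anc (h s) u \<noteq> anc (h s) u'"
proof
  assume eq: "anc (h s) u = anc (h s) u'"
  have "h s < h u'" using h_less[OF s(1) u s(2)] u'(2) by simp
  then have "tree_le lt s u'"
    using anc(2)[OF u'(1), of "h s"] eq anc_eqI[OF u s(1)] s(2) unfolding tree_le_def by auto
  then show False using \<open>h s < h u'\<close> s(3) unfolding tree_le_def by auto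
qed

text \<open>The tree need not be Hausdorff: distinct nodes on a limit level may have the same
  predecessors, so they can only be told apart up to their sets of predecessors.\<close>
lemma separating_level:
  assumes a: "is_limit a" and W: "finite W" "\<And>u. u \<in> W \<Longrightarrow> u \<in> T \<and> h u = a"
  shows "\<exists>c<a. \<forall>u\<in>W. \<forall>u'\<in>W. anc c u = anc c u' \<longrightarrow> preds u = preds u'"
proof -
  have "\<exists>d. d < a \<and> (preds u \<noteq> preds u' \<longrightarrow> anc d u \<noteq> anc d u')"
    if "u \<in> W" "u' \<in> W" for u u'
  proof (cases "preds u = preds u'")
    case True
    then show ?thesis using a unfolding is_limit_def by blast
  next
    case False
    have u: "u \<in> T" "h u = a" and u': "u' \<in> T" "h u' = a" using W(2) that by auto
    from False obtain s where s: "s \<in> T" "lt s u \<and> \<not> lt s u' \<or> lt s u' \<and> \<not> lt s u"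
      unfolding preds_def by blast
    then have "h s < a \<and> anc (h s) u \<noteq> anc (h s) u'"
      using anc_ne_if_predecessor[OF u(1) u'(1) _ s(1)] anc_ne_if_predecessor[OF u'(1) u(1) _ s(1)]
        h_less[OF s(1) u(1)] h_less[OF s(1) u'(1)] u(2) u'(2) by auto
    then show ?thesis by blast
  qed
  then have "\<forall>p\<in>W \<times> W. \<exists>d. d < a \<and>
      (preds (fst p) \<noteq> preds (snd p) \<longrightarrow> anc d (fst p) \<noteq> anc d (snd p))"
    by auto
  from bchoice[OF this] obtain \<delta> where \<delta>: "\<forall>p\<in>W \<times> W. \<delta> p < a \<and>
      (preds (fst p) \<noteq> preds (snd p) \<longrightarrow> anc (\<delta> p) (fst p) \<noteq> anc (\<delta> p) (snd p))"
    ..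
  obtain c where c: "c < a" "\<forall>d\<in>\<delta> ` (W \<times> W). d < c"
    using is_limit_finite_bound[OF a, of "\<delta> ` (W \<times> W)"] \<delta> W(1) by auto
  have "anc c u \<noteq> anc c u'"
    if "u \<in> W" "u' \<in> W" "preds u \<noteq> preds u'" for u u'
  proof
    let ?d = "\<delta> (u, u')"
    have "?d < c" "anc ?d u \<noteq> anc ?d u'" using c(2) \<delta> that by auto
    have anc_d: "anc ?d (anc c v) = anc ?d v" if "v \<in> W" for v
      using anc_anc[of v ?d c] W(2)[OF \<open>v \<in> W\<close>] c(1) \<open>?d < c\<close> by simp
    assume "anc c u = anc c u'"
    then have "anc ?d u = anc ?d u'" using anc_d[OF that(1)] anc_d[OF that(2)] by simp
    with \<open>anc ?d u \<noteq> anc ?d u'\<close> show False ..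
  qed
  then show ?thesis using c(1) by blast
qed

lemma not_lt_if_traces_match:
  assumes x: "x \<in> T" "a \<le> h x" "h x < b" and y: "y \<in> T" "b \<le> h y" and "c < a"
    and us: "anc a x \<in> set us" and ws: "anc b y \<in> set ws" and "length us = length ws"
    and traces: "map (anc c) us = map (anc c) ws"
    and sep: "\<And>w w'. w \<in> set ws \<Longrightarrow> w' \<in> set ws \<Longrightarrow> anc c w = anc c w' \<Longrightarrow>
      preds w = preds w'"
    and slots: "\<And>k. k < length us \<Longrightarrow> \<not> lt (us ! k) (ws ! k)"
  shows "\<not> lt x y"
proof
  assume "lt x y"
  define u where "u = anc a x"
  define w where "w = anc b y"
  have u: "u \<in> T" "tree_le lt u x" "h u = a" using anc[OF x(1,2)] unfolding u_def by auto
  have w: "w \<in> T" "tree_le lt w y" "h w = b" using anc[OF y] unfolding w_def by auto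
  have "a < b" using x by simp
  have "lt u y" using tree_le_lt_trans[OF u(1) x(1) y(1) u(2) \<open>lt x y\<close>] .
  have "lt u w"
  proof (cases "w = y")
    case False
    then have "lt w y" using w(2) unfolding tree_le_def by simp
    then show ?thesis
      using predecessors_linear[OF y(1) u(1) w(1) \<open>lt u y\<close>] h_less[OF w(1) u(1)] u(3) w(3) \<open>a < b\<close>
      by auto
  qed (use \<open>lt u y\<close> in simp)
  have "c \<le> h u" using u(3) \<open>c < a\<close> by simp
  then have anc_w: "anc c w = anc c u"
    using anc_eqI[OF w(1) anc(1)[OF u(1)]] anc[OF u(1)] tree_le_lt_trans[OF _ u(1) w(1) _ \<open>lt u w\<close>]
    unfolding tree_le_def by auto
  txt \<open>Slot k of the \<beta>-list has the same trace at c as w, hence the same predecessors,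
    so u lies below it as well.\<close>
  obtain k where k: "k < length us" "us ! k = u" using us unfolding u_def by (auto simp: in_set_conv_nth)
  have "ws ! k \<in> set ws" using k(1) \<open>length us = length ws\<close> by simp
  moreover have "anc c (ws ! k) = anc c w"
    using traces k \<open>length us = length ws\<close> anc_w by (metis nth_map)
  ultimately have "preds (ws ! k) = preds w" using sep ws unfolding w_def by blast
  then have "lt u (ws ! k)" using u(1) \<open>lt u w\<close> unfolding preds_def by blast
  then show False using slots[OF k(1)] k(2) by simp
qed

lemma SS_stationary_antichain_section:
  assumes SS: "SS TYPE('i) T lt" and S: "stationary S"
    and v: "\<And>a. a \<in> S \<Longrightarrow> v a \<in> T \<and> h (v a) = a"
  shows "\<exists>S'\<subseteq>S. stationary S' \<and> (\<forall>a\<in>S'. \<forall>b\<in>S'. a \<noteq> b \<longrightarrow> \<not> lt (v a) (v b))"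
proof -
  have "h ` v ` S = S" using v by force
  then have "stationary_subset TYPE('i) T lt (v ` S)"
    using S v unfolding stationary_subset_def h_def[symmetric] by auto
  then obtain A where A: "A \<subseteq> v ` S" "antichain T lt A" "stationary_subset TYPE('i) T lt A"
    using SS unfolding SS_def by blast
  have "h ` A \<subseteq> S" "stationary (h ` A)"
    using A(1,3) v unfolding stationary_subset_def h_def[symmetric] by auto
  moreover have "v a \<in> A" if "a \<in> h ` A" for a
    using that A(1) v by auto
  moreover have "v a \<noteq> v b" if "a \<in> S" "b \<in> S" "a \<noteq> b" for a b
  proof
    assume "v a = v b"
    then have "h (v a) = h (v b)" by simp
    then show False using v[OF that(1)] v[OF that(2)] that(3) by simp
  qed
  ultimately have "\<forall>a\<in>h ` A. \<forall>b\<in>h ` A. a \<noteq> b \<longrightarrow> \<not> lt (v a) (v b)"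
    using A(2) unfolding antichain_def by (metis subsetD)
  then show ?thesis using \<open>h ` A \<subseteq> S\<close> \<open>stationary (h ` A)\<close> by blast
qed

lemma SS_stationary_antichain_slots:
  fixes m :: nat
  assumes SS: "SS TYPE('i) T lt" and S: "stationary S"
    and v: "\<And>a k. a \<in> S \<Longrightarrow> k < m \<Longrightarrow> v a k \<in> T \<and> h (v a k) = a"
  shows "\<exists>S'\<subseteq>S. stationary S' \<and> (\<forall>k<m. \<forall>a\<in>S'. \<forall>b\<in>S'. a \<noteq> b \<longrightarrow> \<not> lt (v a k) (v b k))"
  using v
proof (induction m)
  case 0
  then show ?case using S by blast
next
  case (Suc m)
  then obtain S' where S': "S' \<subseteq> S" "stationary S'"
    "\<forall>k<m. \<forall>a\<in>S'. \<forall>b\<in>S'. a \<noteq> b \<longrightarrow> \<not> lt (v a k) (v b k)"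
    by (metis less_SucI)
  obtain S'' where S'': "S'' \<subseteq> S'" "stationary S''"
    "\<forall>a\<in>S''. \<forall>b\<in>S''. a \<noteq> b \<longrightarrow> \<not> lt (v a m) (v b m)"
    using SS_stationary_antichain_section[OF SS S'(2), of "\<lambda>a. v a m"] Suc.prems S'(1) by blast
  have "\<not> lt (v a k) (v b k)" if "k < Suc m" "a \<in> S''" "b \<in> S''" "a \<noteq> b" for k a b
  proof (cases "k = m")
    case False
    then show ?thesis using S'(3) that S''(1) by (auto simp: less_Suc_eq)
  qed (use that S''(3) in blast)
  moreover have "S'' \<subseteq> S" using S''(1) S'(1) by (rule subset_trans)
  ultimately show ?case using S''(2) by blast
qed

lemma SS_stationary_matching_lists:
  assumes SS: "SS TYPE('i) T lt" and S: "stationary S"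
    and limit: "\<And>a. a \<in> S \<Longrightarrow> is_limit a"
    and ws: "\<And>a w. a \<in> S \<Longrightarrow> w \<in> set (ws a) \<Longrightarrow> w \<in> T \<and> h w = a"
  obtains S' c where "S' \<subseteq> S" "stationary S'" "\<And>a. a \<in> S' \<Longrightarrow> c < a"
    "\<And>a w w'. a \<in> S' \<Longrightarrow> w \<in> set (ws a) \<Longrightarrow> w' \<in> set (ws a) \<Longrightarrow> anc c w = anc c w' \<Longrightarrow>
      preds w = preds w'"
    "\<And>a b. a \<in> S' \<Longrightarrow> b \<in> S' \<Longrightarrow> map (anc c) (ws a) = map (anc c) (ws b)"
    "\<And>a b k. a \<in> S' \<Longrightarrow> b \<in> S' \<Longrightarrow> a \<noteq> b \<Longrightarrow> k < length (ws a) \<Longrightarrow>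
      \<not> lt (ws a ! k) (ws b ! k)"
proof -
  have "\<forall>a\<in>S. \<exists>c. c < a \<and> (\<forall>w\<in>set (ws a). \<forall>w'\<in>set (ws a).
      anc c w = anc c w' \<longrightarrow> preds w = preds w')"
    using separating_level[OF limit] ws by blast
  from bchoice[OF this] obtain sep where sep: "\<forall>a\<in>S. sep a < a \<and> (\<forall>w\<in>set (ws a). \<forall>w'\<in>set (ws a).
      anc (sep a) w = anc (sep a) w' \<longrightarrow> preds w = preds w')" ..
  obtain c where S1: "stationary {a\<in>S. sep a = c}"
    using pressing_down[OF omega1 S, of sep] sep by blast
  have "(\<lambda>a. map (anc c) (ws a)) ` {a\<in>S. sep a = c} \<subseteq> lists {t\<in>T. h t = c}"
    using sep ws anc by fastforce
  then obtain z where S2: "stationary {a\<in>{a\<in>S. sep a = c}. map (anc c) (ws a) = z}"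
    using stationary_countable_partition[OF omega1 S1] countable_lists[OF countable_level]
      countable_subset by blast
  have "ws a ! k \<in> T \<and> h (ws a ! k) = a"
    if "a \<in> {a\<in>{a\<in>S. sep a = c}. map (anc c) (ws a) = z}" "k < length z" for a k
  proof -
    have "length (ws a) = length z" using that(1) length_map by force
    then show ?thesis using ws that by auto
  qed
  then obtain S' where S': "S' \<subseteq> {a\<in>{a\<in>S. sep a = c}. map (anc c) (ws a) = z}" "stationary S'"
    "\<forall>k<length z. \<forall>a\<in>S'. \<forall>b\<in>S'. a \<noteq> b \<longrightarrow> \<not> lt (ws a ! k) (ws b ! k)"
    using SS_stationary_antichain_slots[OF SS S2, of "length z" "\<lambda>a k. ws a ! k"] by blast
  have in_S': "a \<in> S" "sep a = c" "map (anc c) (ws a) = z" if "a \<in> S'" for a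
    using S'(1) that by auto
  show thesis
  proof (rule that)
    show "S' \<subseteq> S" using in_S'(1) by blast
    show "stationary S'" by (rule S'(2))
    show "c < a" if "a \<in> S'" for a using sep in_S'[OF that] by auto
    show "preds w = preds w'"
      if "a \<in> S'" "w \<in> set (ws a)" "w' \<in> set (ws a)" "anc c w = anc c w'" for a w w'
      using sep in_S'[OF that(1)] that(2-4) by metis
    show "map (anc c) (ws a) = map (anc c) (ws b)" if "a \<in> S'" "b \<in> S'" for a b
      using in_S'(3) that by simp
    show "\<not> lt (ws a ! k) (ws b ! k)" if "a \<in> S'" "b \<in> S'" "a \<noteq> b" "k < length (ws a)" for a b k
      using in_S'(3)[OF that(1)] S'(3) that by (metis length_map)
  qed
qed

lemma SS_separates_high_parts:
  assumes SS: "SS TYPE('i) T lt" and S: "stationary S"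
    and limit: "\<And>a. a \<in> S \<Longrightarrow> is_limit a"
    and H: "\<And>a. a \<in> S \<Longrightarrow> finite (H a)" "\<And>a x. a \<in> S \<Longrightarrow> x \<in> H a \<Longrightarrow> x \<in> T \<and> a \<le> h x"
    and bounded: "\<And>a b x. a \<in> S \<Longrightarrow> b \<in> S \<Longrightarrow> a < b \<Longrightarrow> x \<in> H a \<Longrightarrow> h x < b"
  shows "\<exists>S'\<subseteq>S. stationary S' \<and> (\<forall>a\<in>S'. \<forall>b\<in>S'. a \<noteq> b \<longrightarrow> (\<forall>x\<in>H a. \<forall>y\<in>H b. \<not> lt x y))"
proof -
  define ws where "ws a = (SOME l. set l = anc a ` H a)" for a
  have ws: "set (ws a) = anc a ` H a" if "a \<in> S" for a
    using someI_ex[OF finite_list[of "anc a ` H a"]] H(1)[OF that] unfolding ws_def by blast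
  have ws_level: "w \<in> T \<and> h w = a" if "a \<in> S" "w \<in> set (ws a)" for a w
    using that ws[OF that(1)] H(2)[OF that(1)] anc by auto
  obtain S' c where S': "S' \<subseteq> S" "stationary S'"
    and "\<And>a. a \<in> S' \<Longrightarrow> c < a"
    and sep: "\<And>a w w'. a \<in> S' \<Longrightarrow> w \<in> set (ws a) \<Longrightarrow> w' \<in> set (ws a) \<Longrightarrow> anc c w = anc c w' \<Longrightarrow>
      preds w = preds w'"
    and traces: "\<And>a b. a \<in> S' \<Longrightarrow> b \<in> S' \<Longrightarrow> map (anc c) (ws a) = map (anc c) (ws b)"
    and slots: "\<And>a b k. a \<in> S' \<Longrightarrow> b \<in> S' \<Longrightarrow> a \<noteq> b \<Longrightarrow> k < length (ws a) \<Longrightarrow>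
      \<not> lt (ws a ! k) (ws b ! k)"
    using SS_stationary_matching_lists[OF SS S limit ws_level] by blast
  have up: "\<not> lt x y" if "a \<in> S'" "b \<in> S'" "a < b" "x \<in> H a" "y \<in> H b" for a b x y
  proof (rule not_lt_if_traces_match)
    show "x \<in> T" "a \<le> h x" "y \<in> T" "b \<le> h y" using H(2) S'(1) that by auto
    show "h x < b" using bounded[of a b x] S'(1) that by blast
    show "c < a" "anc a x \<in> set (ws a)" "anc b y \<in> set (ws b)"
      using \<open>\<And>a. a \<in> S' \<Longrightarrow> c < a\<close> ws S'(1) that by auto
    show "map (anc c) (ws a) = map (anc c) (ws b)" using traces that by blast
    then show "length (ws a) = length (ws b)" by (metis length_map)
    show "\<And>k. k < length (ws a) \<Longrightarrow> \<not> lt (ws a ! k) (ws b ! k)"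
      using slots that by (simp add: order.strict_implies_not_eq)
    show "\<And>w w'. w \<in> set (ws b) \<Longrightarrow> w' \<in> set (ws b) \<Longrightarrow> anc c w = anc c w' \<Longrightarrow>
        preds w = preds w'"
      using sep that(2) by blast
  qed
  have down: "\<not> lt x y" if "a \<in> S'" "b \<in> S'" "b < a" "x \<in> H a" "y \<in> H b" for a b x y
  proof
    assume "lt x y"
    have "h y < a" "a \<le> h x" "x \<in> T" "y \<in> T"
      using bounded[of b a y] H(2)[of a x] H(2)[of b y] S'(1) that by auto
    then show False using h_less[OF _ _ \<open>lt x y\<close>] by simp
  qed
  have "\<not> lt x y" if "a \<in> S'" "b \<in> S'" "a \<noteq> b" "x \<in> H a" "y \<in> H b" for a b x y
    using that up down by (metis neqE)
  then show ?thesis using S'(1,2) by blast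
qed

text \<open>A \<Delta>-system lemma for finite conditions.\<close>
lemma stationary_root:
  fixes p :: "'i \<Rightarrow> 'a \<rightharpoonup> 'b::countable"
  assumes S: "stationary S" and p: "\<And>a. a \<in> S \<Longrightarrow> finite (dom (p a)) \<and> dom (p a) \<subseteq> T"
  shows "\<exists>S'\<subseteq>S. \<exists>q. stationary S' \<and> (\<forall>a\<in>S'. is_limit a \<and> p a |` {x. h x < a} = q) \<and>
    (\<forall>a\<in>S'. \<forall>b\<in>S'. a < b \<longrightarrow> (\<forall>x\<in>dom (p a). h x < b))"
proof -
  obtain S1 where S1: "S1 \<subseteq> S" "stationary S1" "\<forall>a\<in>S1. is_limit a"
    and bounded: "\<forall>a\<in>S1. \<forall>b\<in>S1. a < b \<longrightarrow> (\<forall>x\<in>h ` dom (p a). x < b)"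
    using stationary_limits_bounding_finite_sets[OF omega1 S, of "\<lambda>a. h ` dom (p a)"] p by blast
  define f where "f a = (SOME \<beta>. \<beta> < a \<and> (\<forall>x\<in>dom (p a). h x < a \<longrightarrow> h x < \<beta>))" for a
  have f: "f a < a \<and> (\<forall>x\<in>dom (p a). h x < a \<longrightarrow> h x < f a)" if "a \<in> S1" for a
  proof -
    have "\<exists>\<beta><a. \<forall>y\<in>h ` {x\<in>dom (p a). h x < a}. y < \<beta>"
      using that p S1 by (intro is_limit_finite_bound) auto
    then have "\<exists>\<beta>. \<beta> < a \<and> (\<forall>x\<in>dom (p a). h x < a \<longrightarrow> h x < \<beta>)" by blast
    from someI_ex[OF this] show ?thesis unfolding f_def .
  qed
  obtain \<gamma> where S2: "stationary {a\<in>S1. f a = \<gamma>}"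
    using pressing_down[OF omega1 S1(2), of f] f by blast
  have "finite (dom (p a |` {x. h x < a})) \<and> dom (p a |` {x. h x < a}) \<subseteq> {t\<in>T. h t < \<gamma>}"
    if "a \<in> S1" "f a = \<gamma>" for a
    using f[OF that(1)] p[of a] S1(1) that by auto
  then have "(\<lambda>a. p a |` {x. h x < a}) ` {a\<in>S1. f a = \<gamma>} \<subseteq>
      {q. finite (dom q) \<and> dom q \<subseteq> {t\<in>T. h t < \<gamma>}}"
    by blast
  then have "countable ((\<lambda>a. p a |` {x. h x < a}) ` {a\<in>S1. f a = \<gamma>})"
    by (rule countable_subset[OF _ countable_finite_maps[OF countable_below]])
  then obtain q where S3: "stationary {a\<in>{a\<in>S1. f a = \<gamma>}. p a |` {x. h x < a} = q}"
    using stationary_countable_partition[OF omega1 S2] by blast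
  have "\<forall>a\<in>S1. \<forall>b\<in>S1. a < b \<longrightarrow> (\<forall>x\<in>dom (p a). h x < b)" using bounded by blast
  then show ?thesis using S1 S3
    by (intro exI[of _ "{a\<in>{a\<in>S1. f a = \<gamma>}. p a |` {x. h x < a} = q}"] exI[of _ q]) auto
qed

lemma centered_ST_if_common_root:
  assumes pS: "\<And>a. a \<in> S \<Longrightarrow> p a \<in> ST T lt"
    and root: "\<And>a. a \<in> S \<Longrightarrow> p a |` {x. h x < a} = q"
    and bounded: "\<And>a b x. a \<in> S \<Longrightarrow> b \<in> S \<Longrightarrow> a < b \<Longrightarrow> x \<in> dom (p a) \<Longrightarrow> h x < b"
    and separated: "\<And>a b x y. a \<in> S \<Longrightarrow> b \<in> S \<Longrightarrow> a \<noteq> b \<Longrightarrow> x \<in> dom (p a) \<Longrightarrow> a \<le> h x \<Longrightarrow>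
      y \<in> dom (p b) \<Longrightarrow> b \<le> h y \<Longrightarrow> \<not> lt x y"
  shows "centered (ST T lt) ST_le (p ` S)"
proof (rule centered_ST_if_compatible)
  have low: "t \<in> dom q \<longleftrightarrow> t \<in> dom (p a) \<and> h t < a" "t \<in> dom q \<Longrightarrow> p a t = q t"
    if "a \<in> S" for a t
    using root[OF that, symmetric] by auto
  have high_unique: "a = b" if "a \<in> S" "b \<in> S" "t \<in> dom (p a)" "t \<in> dom (p b)"
    "a \<le> h t" "b \<le> h t" for a b t
    using bounded[of a b t] bounded[of b a t] that by (metis leD linorder_cases)
  have fibre: "\<not> lt s t" if "a \<in> S" "p a s = Some n" "p a t = Some n" "s \<noteq> t" for a s t n
    using pS that unfolding ST_def antichain_def by blast
  show "p ` S \<subseteq> ST T lt" using pS by blast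
  show "r t = r' t" if rr': "r \<in> p ` S" "r' \<in> p ` S" and t: "t \<in> dom r" "t \<in> dom r'"
    for r r' t
  proof -
    obtain a b where ab: "a \<in> S" "b \<in> S" "r = p a" "r' = p b" using rr' by blast
    show ?thesis
    proof (cases "t \<in> dom q")
      case True
      then show ?thesis using low(2) ab by simp
    next
      case False
      then have "a \<le> h t" "b \<le> h t"
        using low(1)[OF ab(1), of t] low(1)[OF ab(2), of t] ab t by (auto simp: not_less)
      then have "a = b" using high_unique[OF ab(1,2)] ab t by simp
      then show ?thesis using ab by simp
    qed
  qed
  show "\<not> lt s t" if rr': "r \<in> p ` S" "r' \<in> p ` S" and ps: "r s = Some n" and pt: "r' t = Some n"
    and "s \<noteq> t" for r r' s t n
  proof -
    obtain a b where ab: "a \<in> S" "b \<in> S" "r = p a" "r' = p b" using rr' by blast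
    consider "s \<in> dom q" | "t \<in> dom q" | "a \<le> h s" "b \<le> h t"
      using low(1)[OF ab(1), of s] low(1)[OF ab(2), of t] ps pt ab(3,4) by (auto simp: not_less)
    then show ?thesis
    proof cases
      case 1
      then have "p b s = Some n" using low(2)[OF ab(1)] low(2)[OF ab(2)] ps ab(3) by simp
      then show ?thesis using fibre[OF ab(2) _ _ \<open>s \<noteq> t\<close>] pt ab(4) by blast
    next
      case 2
      then have "p a t = Some n" using low(2)[OF ab(1)] low(2)[OF ab(2)] pt ab(4) by simp
      then show ?thesis using fibre[OF ab(1) _ _ \<open>s \<noteq> t\<close>] ps ab(3) by blast
    next
      case 3
      then show ?thesis
        using separated[OF ab(1,2) _ _ 3(1) _ 3(2)] fibre[OF ab(1) _ _ \<open>s \<noteq> t\<close>] ps pt ab(3,4)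
        by (cases "a = b") auto
    qed
  qed
qed

theorem stat_pc_ST_if_SS:
  assumes SS: "SS TYPE('i) T lt"
  shows "stat_pc TYPE('i) (ST T lt) ST_le"
  unfolding stat_pc_def
proof (intro allI impI)
  fix S :: "'i set" and p :: "'i \<Rightarrow> 'a \<rightharpoonup> nat"
  assume S: "stationary S" and pS: "\<forall>a\<in>S. p a \<in> ST T lt"
  have p: "finite (dom (p a)) \<and> dom (p a) \<subseteq> T" if "a \<in> S" for a
    using pS that unfolding ST_def by blast
  then obtain S1 q where S1: "S1 \<subseteq> S" "stationary S1"
    and root: "\<forall>a\<in>S1. is_limit a \<and> p a |` {x. h x < a} = q"
    and bounded: "\<forall>a\<in>S1. \<forall>b\<in>S1. a < b \<longrightarrow> (\<forall>x\<in>dom (p a). h x < b)"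
    using stationary_root[OF S, of p] by blast
  define H where "H a = {x\<in>dom (p a). a \<le> h x}" for a
  have "\<exists>S2\<subseteq>S1. stationary S2 \<and> (\<forall>a\<in>S2. \<forall>b\<in>S2. a \<noteq> b \<longrightarrow> (\<forall>x\<in>H a. \<forall>y\<in>H b. \<not> lt x y))"
  proof (rule SS_separates_high_parts[OF SS S1(2)])
    show "is_limit a" "finite (H a)" if "a \<in> S1" for a
      using root p S1(1) that unfolding H_def by auto
    show "x \<in> T \<and> a \<le> h x" if "a \<in> S1" "x \<in> H a" for a x
      using p S1(1) that unfolding H_def by auto
    show "h x < b" if "a \<in> S1" "b \<in> S1" "a < b" "x \<in> H a" for a b x
      using bounded that unfolding H_def by auto
  qed
  then obtain S2 where S2: "S2 \<subseteq> S1" "stationary S2"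
    and separated: "\<forall>a\<in>S2. \<forall>b\<in>S2. a \<noteq> b \<longrightarrow> (\<forall>x\<in>H a. \<forall>y\<in>H b. \<not> lt x y)"
    by blast
  have "centered (ST T lt) ST_le (p ` S2)"
  proof (rule centered_ST_if_common_root)
    show "p a \<in> ST T lt" "p a |` {x. h x < a} = q" if "a \<in> S2" for a
      using pS root S1(1) S2(1) that by auto
    show "h x < b" if "a \<in> S2" "b \<in> S2" "a < b" "x \<in> dom (p a)" for a b x
      using bounded S2(1) that by blast
    show "\<not> lt x y" if "a \<in> S2" "b \<in> S2" "a \<noteq> b" "x \<in> dom (p a)" "a \<le> h x"
      "y \<in> dom (p b)" "b \<le> h y" for a b x y
      using separated that unfolding H_def by blast
  qed
  then show "\<exists>S'\<subseteq>S. stationary S' \<and> centered (ST T lt) ST_le (p ` S')"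
    using S1(1) S2 by blast
qed

end

lemma stat_pc_aT_if_stat_pc_ST:
  assumes pc: "stat_pc TYPE('i::wellorder) (ST T lt) ST_le"
  shows "stat_pc TYPE('i) (aT T lt) aT_le"
  unfolding stat_pc_def
proof (intro allI impI)
  fix S :: "'i set" and p :: "'i \<Rightarrow> 'a set"
  assume S: "stationary S" and pS: "\<forall>a\<in>S. p a \<in> aT T lt"
  define c where "c a = (\<lambda>_. Some (0::nat)) |` p a" for a
  have "c a \<in> ST T lt" if "a \<in> S" for a
  proof -
    have "finite (p a)" "antichain T lt (p a)" using pS that unfolding aT_def by auto
    moreover have "{t. c a t = Some n} \<subseteq> p a" for n
      unfolding c_def restrict_map_def by (auto split: if_splits)
    ultimately have "antichain T lt {t. c a t = Some n}" for n
      unfolding antichain_def by blast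
    moreover have "dom (c a) = p a" unfolding c_def by auto
    ultimately show ?thesis
      using \<open>finite (p a)\<close> \<open>antichain T lt (p a)\<close> unfolding ST_def antichain_def by auto
  qed
  then obtain S' where S': "S' \<subseteq> S" "stationary S'" "centered (ST T lt) ST_le (c ` S')"
    using pc[unfolded stat_pc_def, rule_format, of S c] S by blast
  have "centered (aT T lt) aT_le (p ` S')"
    unfolding centered_def
  proof (intro allI impI)
    fix F assume F: "finite F" "F \<subseteq> p ` S'"
    then obtain G where G: "G \<subseteq> S'" "finite G" "F = p ` G" by (meson finite_subset_image)
    then have "finite (c ` G)" "c ` G \<subseteq> c ` S'" by auto
    then obtain r where r: "r \<in> ST T lt" "\<forall>q\<in>c ` G. ST_le r q"
      using S'(3) unfolding centered_def by blast
    have "\<Union>F \<subseteq> {t. r t = Some 0}"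
      using r(2) G(3) unfolding ST_le_def map_le_def c_def by (force simp: dom_def)
    then have "antichain T lt (\<Union>F)"
      using r(1) unfolding ST_def antichain_def by blast
    moreover have "\<forall>A\<in>F. finite A" using F(2) S'(1) pS unfolding aT_def by auto
    then have "finite (\<Union>F)" using F(1) by blast
    ultimately have "\<Union>F \<in> aT T lt" unfolding aT_def by blast
    then show "\<exists>r\<in>aT T lt. \<forall>q\<in>F. aT_le r q" unfolding aT_le_def by blast
  qed
  then show "\<exists>S'\<subseteq>S. stationary S' \<and> centered (aT T lt) aT_le (p ` S')"
    using S'(1,2) by blast
qed

lemma SS_if_stat_pc_aT:
  assumes pc: "stat_pc TYPE('i::wellorder) (aT T lt) aT_le"
  shows "SS TYPE('i) T lt"
  unfolding SS_def
proof (intro allI impI)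
  fix X assume "stationary_subset TYPE('i) T lt X"
  then have XT: "X \<subseteq> T" and S: "stationary ((ht T lt :: 'a \<Rightarrow> 'i) ` X)"
    unfolding stationary_subset_def by auto
  define t where "t a = (SOME x. x \<in> X \<and> ht T lt x = a)" for a :: 'i
  have t: "t a \<in> X \<and> ht T lt (t a) = a" if "a \<in> ht T lt ` X" for a
    using someI_ex[of "\<lambda>x. x \<in> X \<and> ht T lt x = a"] that unfolding t_def by blast
  have "{t a} \<in> aT T lt" if "a \<in> ht T lt ` X" for a
    using t[OF that] XT unfolding aT_def antichain_def by auto
  then obtain S' where S': "S' \<subseteq> ht T lt ` X" "stationary S'" "centered (aT T lt) aT_le ((\<lambda>a. {t a}) ` S')"
    using pc[unfolded stat_pc_def, rule_format, of "ht T lt ` X" "\<lambda>a. {t a}"] S by blast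
  have "antichain T lt (t ` S')"
    unfolding antichain_def
  proof (rule conjI; (intro ballI impI)?)
    show "t ` S' \<subseteq> T" using t S'(1) XT by blast
    fix x y assume "x \<in> t ` S'" "y \<in> t ` S'" "x \<noteq> y"
    then obtain a b where "a \<in> S'" "b \<in> S'" "x = t a" "y = t b" by blast
    then have "finite {{x}, {y}}" "{{x}, {y}} \<subseteq> (\<lambda>a. {t a}) ` S'" by auto
    then obtain r where "r \<in> aT T lt" "\<forall>q\<in>{{x}, {y}}. aT_le r q"
      using S'(3) unfolding centered_def by blast
    then have "r \<in> aT T lt" "x \<in> r" "y \<in> r" unfolding aT_le_def by auto
    then show "\<not> lt x y \<and> \<not> lt y x" using \<open>x \<noteq> y\<close> unfolding aT_def antichain_def by blast
  qed
  moreover have "ht T lt ` t ` S' = S'" using t S'(1) by (force simp: image_image)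
  then have "stationary_subset TYPE('i) T lt (t ` S')"
    using S'(1,2) t XT unfolding stationary_subset_def by auto
  moreover have "t ` S' \<subseteq> X" using t S'(1) by blast
  ultimately show "\<exists>A\<subseteq>X. antichain T lt A \<and> stationary_subset TYPE('i) T lt A" by blast
qed

theorem lemma4:
  fixes T :: "'a set" and lt :: "'a \<Rightarrow> 'a \<Rightarrow> bool"
  assumes "omega1_like TYPE('i::wellorder)"
    and "aronszajn TYPE('i) T lt"
  shows "(SS TYPE('i) T lt \<longleftrightarrow> stat_pc TYPE('i) (aT T lt) aT_le)
       \<and> (stat_pc TYPE('i) (aT T lt) aT_le \<longleftrightarrow> stat_pc TYPE('i) (ST T lt) ST_le)"
proof -
  interpret aronszajn_tree T lt "ht T lt :: 'a \<Rightarrow> 'i"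
    using assms by unfold_locales auto
  show ?thesis
    using stat_pc_ST_if_SS stat_pc_aT_if_stat_pc_ST SS_if_stat_pc_aT by blast
qed

end
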